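(* Let $\varphi$ be a non-trivial primitive Dirichlet character of conductor $f$, and let $N,M,L$ be positive integers with $f^2ML\mid N$ and $(fM,L)=1$. Then $12\,\tilde\beta_{\Gamma_0(N),\varphi,M,L}\in\mathbb{Z}[\zeta_f,\varphi]$.
   Context: $T_1=\prod_{l\mid M,\ l\nmid f}l$, $T_2=\prod_{q\mid L}q$ (over primes). $\xi$ is the primitive character associated to $\varphi^2$, of conductor $n$; $\tau(\chi)$ is the Gauss sum; $B_2(\chi)=m\sum_{a=0}^{m-1}\chi(a)((a/m)^2-a/m+1/6)$ for primitive $\chi$ of conductor $m$. $S_\varphi$ is the set of primes $q\mid T_2$ with $\varphi(q)=\pm1$ and $\phi(T_{2,\varphi})=\prod_{q\in S_\varphi}(q-1)$. For $p\mid f$, $\delta_p=1$ if $\nu_p(M)=0$ and $\nu_p(N/f^2)\ge1$, otherwise $\delta_p=0$. $\beta_{\Gamma_0(N),\varphi,M,L}=\frac{f^3T_1\phi(T_{2,\varphi})}{4n}\big(\prod_{p\mid f}p^{\nu_p(M)+\delta_p}\big)\frac{\tau(\varphi^{-1})}{\tau(\xi^{-1})}B_2(\xi^{-1})\prod_{p\mid fT_1}(1-\xi(p)p^{-2})$ and $\tilde\beta_{\Gamma_0(N),\varphi,M,L}=fT_1\beta_{\Gamma_0(N),\varphi,M,L}$. *)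

theory Defs
  imports Complex_Main "HOL-Number_Theory.Number_Theory"
begin

definition dchar :: "nat \<Rightarrow> (nat \<Rightarrow> complex) \<Rightarrow> bool" where
  "dchar m \<chi> \<longleftrightarrow> m > 0 \<and> (\<forall>a. \<chi> (a + m) = \<chi> a) \<and>
     (\<forall>a b. \<chi> (a * b) = \<chi> a * \<chi> b) \<and> \<chi> 1 = 1 \<and>
     (\<forall>a. \<chi> a = 0 \<longleftrightarrow> \<not> coprime a m)"

text \<open>Primitive character of conductor m: not induced from any proper divisor d of m.\<close>
definition primitive_dchar :: "nat \<Rightarrow> (nat \<Rightarrow> complex) \<Rightarrow> bool" where
  "primitive_dchar m \<chi> \<longleftrightarrow> dchar m \<chi> \<and>
     (\<forall>d. d dvd m \<and> d < m \<longrightarrow> (\<exists>a. coprime a m \<and> [a = 1] (mod d) \<and> \<chi> a \<noteq> 1))"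

text \<open>Inverse character (inverse 0 = 0).\<close>
definition dchar_inv :: "(nat \<Rightarrow> complex) \<Rightarrow> nat \<Rightarrow> complex" where
  "dchar_inv \<chi> = (\<lambda>a. inverse (\<chi> a))"

definition gauss_sum :: "nat \<Rightarrow> (nat \<Rightarrow> complex) \<Rightarrow> complex" where
  "gauss_sum m \<chi> = (\<Sum>a<m. \<chi> a * exp (2 * pi * \<i> * of_nat a / of_nat m))"

definition B2 :: "nat \<Rightarrow> (nat \<Rightarrow> complex) \<Rightarrow> complex" where
  "B2 m \<chi> = of_nat m * (\<Sum>a<m. \<chi> a *
      of_real ((real a / real m)^2 - real a / real m + 1/6))"

definition T1 :: "nat \<Rightarrow> nat \<Rightarrow> nat" where
  "T1 f M = (\<Prod>l\<in>{l. prime l \<and> l dvd M \<and> \<not> l dvd f}. l)"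

definition T2 :: "nat \<Rightarrow> nat" where
  "T2 L = (\<Prod>q\<in>{q. prime q \<and> q dvd L}. q)"

definition S_phi :: "(nat \<Rightarrow> complex) \<Rightarrow> nat \<Rightarrow> nat set" where
  "S_phi \<phi> L = {q. prime q \<and> q dvd T2 L \<and> (\<phi> q = 1 \<or> \<phi> q = -1)}"

definition phi_T2 :: "(nat \<Rightarrow> complex) \<Rightarrow> nat \<Rightarrow> nat" where
  "phi_T2 \<phi> L = (\<Prod>q\<in>S_phi \<phi> L. q - 1)"

definition delta :: "nat \<Rightarrow> nat \<Rightarrow> nat \<Rightarrow> nat \<Rightarrow> nat" where
  "delta f N M p = (if multiplicity p M = 0 \<and> multiplicity p (N div f^2) \<ge> 1 then 1 else 0)"

text \<open>beta_{Gamma_0(N),phi,M,L}; xi is the primitive character of conductor n attached to phi^2.\<close>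
definition beta :: "nat \<Rightarrow> (nat \<Rightarrow> complex) \<Rightarrow> nat \<Rightarrow> (nat \<Rightarrow> complex)
                     \<Rightarrow> nat \<Rightarrow> nat \<Rightarrow> nat \<Rightarrow> complex" where
  "beta f \<phi> n \<xi> N M L =
     of_nat (f^3 * T1 f M * phi_T2 \<phi> L) / (4 * of_nat n)
     * of_nat (\<Prod>p\<in>{p. prime p \<and> p dvd f}. p ^ (multiplicity p M + delta f N M p))
     * (gauss_sum f (dchar_inv \<phi>) / gauss_sum n (dchar_inv \<xi>))
     * B2 n (dchar_inv \<xi>)
     * (\<Prod>p\<in>{p. prime p \<and> p dvd f * T1 f M}. 1 - \<xi> p / of_nat p ^ 2)"

definition beta_tilde :: "nat \<Rightarrow> (nat \<Rightarrow> complex) \<Rightarrow> nat \<Rightarrow> (nat \<Rightarrow> complex)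
                     \<Rightarrow> nat \<Rightarrow> nat \<Rightarrow> nat \<Rightarrow> complex" where
  "beta_tilde f \<phi> n \<xi> N M L = of_nat (f * T1 f M) * beta f \<phi> n \<xi> N M L"

inductive_set Z_zeta_phi :: "nat \<Rightarrow> (nat \<Rightarrow> complex) \<Rightarrow> complex set" for f \<phi> where
  int: "of_int k \<in> Z_zeta_phi f \<phi>"
| zeta: "exp (2 * pi * \<i> / of_nat f) \<in> Z_zeta_phi f \<phi>"
| val: "\<phi> a \<in> Z_zeta_phi f \<phi>"
| add: "x \<in> Z_zeta_phi f \<phi> \<Longrightarrow> y \<in> Z_zeta_phi f \<phi> \<Longrightarrow> x + y \<in> Z_zeta_phi f \<phi>"
| mult: "x \<in> Z_zeta_phi f \<phi> \<Longrightarrow> y \<in> Z_zeta_phi f \<phi> \<Longrightarrow> x * y \<in> Z_zeta_phi f \<phi>"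

end

theory Submission
  imports Defs
begin

text \<open>Write \<open>T = T1 f M\<close> and let \<open>D\<close> be the product of the primes dividing \<open>f T\<close> but not the
  conductor \<open>n\<close> of \<open>\<xi>\<close>. As \<open>\<xi>\<close> vanishes at the primes dividing \<open>n\<close>, the Euler product is
  \<open>Q / D\<^sup>2\<close> with \<open>Q\<close> in \<open>\<int>[\<zeta>\<^sub>f, \<phi>]\<close> (here \<open>n | f\<close> and the values of \<open>\<xi>\<close> are squares of
  values of \<open>\<phi>\<close>), so \<open>12 f T \<beta>\<close> is \<open>3 f\<^sup>4 T\<^sup>2 / (n D\<^sup>2)\<close> times a natural number, \<open>\<tau>(\<phi>\<^sup>-\<^sup>1) / \<tau>(\<xi>\<^sup>-\<^sup>1)\<close>,
  \<open>B\<^sub>2(\<xi>\<^sup>-\<^sup>1)\<close> and \<open>Q\<close>.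
  For \<open>n > 1\<close>, \<open>\<tau>(\<xi>\<^sup>-\<^sup>1) \<tau>(\<xi>) = n \<xi>(-1)\<close> and \<open>n B\<^sub>2(\<xi>\<^sup>-\<^sup>1) = \<Sum>\<^sub>a \<xi>\<^sup>-\<^sup>1(a) (a\<^sup>2 - n a)\<close> because
  \<open>\<Sum>\<^sub>a \<xi>\<^sup>-\<^sup>1(a) = 0\<close>; with \<open>f = n k\<close> and \<open>D | k T\<close> the remaining rational factor
  \<open>3 f\<^sup>4 T\<^sup>2 / (n\<^sup>3 D\<^sup>2)\<close> is an integer. For \<open>n = 1\<close>, \<open>B\<^sub>2 = 1/6\<close>, and the missing factor 2 comes from
  \<open>f\<^sup>2\<close> if \<open>f\<close> is even and from \<open>q\<^sup>2 - 1\<close> for an odd prime \<open>q | f\<close> otherwise (\<open>f > 1\<close> because \<open>\<phi>\<close>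
  is non-trivial).\<close>

lemma Z_zeta_phi_of_nat: "of_nat k \<in> Z_zeta_phi f \<phi>"
  using Z_zeta_phi.int[of "int k"] by simp

lemma Z_zeta_phi_0: "0 \<in> Z_zeta_phi f \<phi>"
  using Z_zeta_phi_of_nat[of 0] by simp

lemma Z_zeta_phi_1: "1 \<in> Z_zeta_phi f \<phi>"
  using Z_zeta_phi_of_nat[of 1] by simp

lemma Z_zeta_phi_diff:
  assumes "x \<in> Z_zeta_phi f \<phi>" "y \<in> Z_zeta_phi f \<phi>"
  shows "x - y \<in> Z_zeta_phi f \<phi>"
proof -
  have "x - y = x + of_int (-1) * y" by simp
  with assms show ?thesis by (metis Z_zeta_phi.int Z_zeta_phi.add Z_zeta_phi.mult)
qed

lemma Z_zeta_phi_power: "x \<in> Z_zeta_phi f \<phi> \<Longrightarrow> x ^ k \<in> Z_zeta_phi f \<phi>"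
  by (induction k) (auto intro: Z_zeta_phi.mult Z_zeta_phi_1)

lemma Z_zeta_phi_sum:
  "(\<And>x. x \<in> A \<Longrightarrow> g x \<in> Z_zeta_phi f \<phi>) \<Longrightarrow> sum g A \<in> Z_zeta_phi f \<phi>"
  by (induction A rule: infinite_finite_induct)
     (auto intro: Z_zeta_phi.add Z_zeta_phi_0)

lemma Z_zeta_phi_prod:
  "(\<And>x. x \<in> A \<Longrightarrow> g x \<in> Z_zeta_phi f \<phi>) \<Longrightarrow> prod g A \<in> Z_zeta_phi f \<phi>"
  by (induction A rule: infinite_finite_induct)
     (auto intro: Z_zeta_phi.mult Z_zeta_phi_1)

lemma Z_zeta_phi_of_nat_div_mult:
  assumes "b dvd a" "x \<in> Z_zeta_phi f \<phi>"
  shows "of_nat a / of_nat b * x \<in> Z_zeta_phi f \<phi>"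
proof (cases "b = 0")
  case True
  then show ?thesis by (simp add: Z_zeta_phi_0)
next
  case False
  from assms(1) obtain c where "a = b * c" by blast
  with False have "of_nat a / of_nat b * x = of_nat c * x" by simp
  with assms(2) show ?thesis by (simp add: Z_zeta_phi.mult Z_zeta_phi_of_nat)
qed

lemma dchar_pos: "dchar m \<chi> \<Longrightarrow> 0 < m"
  by (simp add: dchar_def)

lemma primitive_dchar_imp_dchar: "primitive_dchar m \<chi> \<Longrightarrow> dchar m \<chi>"
  by (simp add: primitive_dchar_def)

lemma periodic_mod:
  fixes h :: "nat \<Rightarrow> 'a"
  assumes "\<And>y. h (y + n) = h y"
  shows "h (y mod n) = h y"
proof -
  have "h (y mod n + n * k) = h (y mod n)" for k
  proof (induction k)
    case (Suc k)
    then show ?case by (metis add.assoc add.commute assms mult_Suc_right)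
  qed simp
  from this[of "y div n"] show ?thesis by simp
qed

lemma dchar_mod: "dchar m \<chi> \<Longrightarrow> \<chi> (a mod m) = \<chi> a"
  unfolding dchar_def by (intro periodic_mod) auto

lemma dchar_cong: "dchar m \<chi> \<Longrightarrow> [a = b] (mod m) \<Longrightarrow> \<chi> a = \<chi> b"
  unfolding cong_def by (metis dchar_mod)

lemma dchar_power: "dchar m \<chi> \<Longrightarrow> \<chi> (a ^ k) = \<chi> a ^ k"
  by (induction k) (auto simp: dchar_def)

lemma dchar_eq_0_iff: "dchar m \<chi> \<Longrightarrow> \<chi> a = 0 \<longleftrightarrow> \<not> coprime a m"
  by (simp add: dchar_def)

lemma dchar_1: "dchar m \<chi> \<Longrightarrow> \<chi> 1 = 1"
  by (simp add: dchar_def)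

lemma dchar_modulus_1: "dchar 1 \<chi> \<Longrightarrow> \<chi> a = 1"
  using dchar_cong[of 1 \<chi> a 1] dchar_1[of 1 \<chi>] by simp

lemma dchar_inverse_eq_power:
  assumes "dchar m \<chi>" "coprime a m"
  shows "inverse (\<chi> a) = \<chi> a ^ (totient m - 1)"
proof -
  have "\<chi> a ^ totient m = 1"
    using dchar_cong[OF assms(1) euler_theorem[OF assms(2)]] dchar_power[OF assms(1)] assms(1)
    by (simp add: dchar_def)
  moreover have "0 < totient m" using dchar_pos[OF assms(1)] by simp
  ultimately have "\<chi> a * \<chi> a ^ (totient m - 1) = 1"
    by (metis Suc_diff_1 power_Suc)
  then show ?thesis by (simp add: inverse_unique)
qed

lemma Z_zeta_phi_inverse_val:
  assumes "dchar f \<phi>"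
  shows "inverse (\<phi> a) \<in> Z_zeta_phi f \<phi>"
proof (cases "coprime a f")
  case True
  then show ?thesis
    by (simp add: dchar_inverse_eq_power[OF assms] Z_zeta_phi_power Z_zeta_phi.val)
next
  case False
  with assms have "\<phi> a = 0" by (simp add: dchar_eq_0_iff)
  then show ?thesis by (simp add: Z_zeta_phi_0)
qed

lemma sum_mult_reindex_periodic:
  fixes h :: "nat \<Rightarrow> 'a::comm_monoid_add"
  assumes "0 < n" "coprime c n" "\<And>y. h (y + n) = h y"
  shows "(\<Sum>a<n. h (a * c)) = (\<Sum>a<n. h a)"
proof -
  have "inj_on (\<lambda>a. a * c mod n) {..<n}"
    by (rule inj_onI) (use assms(2) in \<open>auto simp: cong_def[symmetric] cong_mult_rcancel_nat cong_less_modulus_unique_nat\<close>)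
  moreover have "(\<lambda>a. a * c mod n) ` {..<n} \<subseteq> {..<n}" using assms(1) by auto
  ultimately have "bij_betw (\<lambda>a. a * c mod n) {..<n} {..<n}"
    by (simp add: bij_betw_def endo_inj_surj)
  then have "(\<Sum>a<n. h (a * c mod n)) = (\<Sum>a<n. h a)"
    by (rule sum.reindex_bij_betw)
  then show ?thesis by (simp add: periodic_mod[of h, OF assms(3)])
qed

definition unit_root :: "nat \<Rightarrow> complex" where
  "unit_root n = exp (2 * pi * \<i> / of_nat n)"

lemma exp_eq_unit_root_power: "exp (2 * pi * \<i> * of_nat a / of_nat n) = unit_root n ^ a"
proof -
  have "2 * pi * \<i> * of_nat a / of_nat n = of_nat a * (2 * pi * \<i> / of_nat n)" by simp
  then show ?thesis unfolding unit_root_def by (simp only: exp_of_nat_mult)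
qed

lemma gauss_sum_eq: "gauss_sum n \<chi> = (\<Sum>a<n. \<chi> a * unit_root n ^ a)"
  unfolding gauss_sum_def exp_eq_unit_root_power ..

lemma unit_root_power_eq_1_iff:
  assumes "0 < n"
  shows "unit_root n ^ k = 1 \<longleftrightarrow> n dvd k"
proof
  assume "unit_root n ^ k = 1"
  moreover have "unit_root n ^ k = cis (2 * pi * real k / real n)"
    unfolding exp_eq_unit_root_power[symmetric] cis_conv_exp by (simp add: algebra_simps)
  ultimately have "cos (2 * pi * real k / real n) = 1"
    by (metis cis.sel(1) one_complex.sel(1))
  then obtain j :: int where "2 * pi * real k / real n = real_of_int j * 2 * pi"
    using cos_one_2pi_int by blast
  with assms have "int k = j * int n" by (simp add: field_simps) (metis of_int_eq_iff of_int_mult of_int_of_nat_eq)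
  then show "n dvd k" by (metis dvd_triv_right int_dvd_int_iff)
next
  assume "n dvd k"
  then obtain j where "k = n * j" by blast
  with assms show "unit_root n ^ k = 1"
    using exp_eq_unit_root_power[of n n] by (simp add: power_mult)
qed

lemma unit_root_power_cong:
  assumes "0 < n" "[a = b] (mod n)"
  shows "unit_root n ^ a = unit_root n ^ b"
proof -
  have "unit_root n ^ k = unit_root n ^ (k mod n)" for k
  proof -
    have "unit_root n ^ k = unit_root n ^ (k mod n) * (unit_root n ^ n) ^ (k div n)"
      by (simp flip: power_mult power_add)
    also have "\<dots> = unit_root n ^ (k mod n)"
      using unit_root_power_eq_1_iff[OF assms(1), of n] by simp
    finally show ?thesis .
  qed
  with assms(2) show ?thesis by (metis cong_def)
qed

lemma sum_unit_root_powers: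
  assumes "0 < n"
  shows "(\<Sum>b<n. (unit_root n ^ k) ^ b) = (if n dvd k then of_nat n else 0)"
proof (cases "n dvd k")
  case False
  then have "unit_root n ^ k \<noteq> 1" using assms by (simp add: unit_root_power_eq_1_iff)
  moreover have "(unit_root n ^ k) ^ n = 1"
    using assms by (simp flip: power_mult add: unit_root_power_eq_1_iff)
  ultimately show ?thesis using False by (simp add: geometric_sum)
next
  case True
  then have "unit_root n ^ k = 1" using assms by (simp add: unit_root_power_eq_1_iff)
  with True show ?thesis by simp
qed

lemma unit_root_dvd:
  assumes "n dvd f" "0 < f"
  shows "unit_root n = unit_root f ^ (f div n)"
proof -
  from assms obtain k where k: "f = n * k" "0 < n" "0 < k" by auto
  then have "2 * pi * \<i> * of_nat (f div n) / of_nat f = 2 * pi * \<i> / (of_nat n :: complex)"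
    by (simp add: field_simps)
  then show ?thesis unfolding unit_root_def by (metis exp_eq_unit_root_power unit_root_def)
qed

text \<open>Twisted Gauss sums \<open>\<Sum>a. \<chi> a \<zeta>\<^sup>a\<^sup>b\<close>: for \<open>b\<close> a unit this is the substitution
  \<open>a \<mapsto> ab\<^sup>-\<^sup>1\<close>; otherwise primitivity gives a \<open>c \<equiv> 1\<close> modulo \<open>n / gcd b n\<close> with
  \<open>\<chi> c \<noteq> 1\<close>, and substituting \<open>a \<mapsto> ac\<close> leaves the sum unchanged.\<close>
lemma twisted_gauss_sum_coprime:
  assumes \<chi>: "dchar n \<chi>" and b: "coprime b n"
  shows "\<chi> b * (\<Sum>a<n. \<chi> a * unit_root n ^ (a * b)) = gauss_sum n \<chi>"
proof -
  have n: "0 < n" using \<chi> by (rule dchar_pos)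
  define h where "h y = \<chi> y * unit_root n ^ y" for y
  have "h (y + n) = h y" for y
    using \<chi> unit_root_power_cong[OF n, of "y + n" y] by (simp add: h_def dchar_def cong_def)
  then have "(\<Sum>a<n. h (a * b)) = (\<Sum>a<n. h a)" by (rule sum_mult_reindex_periodic[OF n b])
  then show ?thesis
    using \<chi> by (simp add: h_def gauss_sum_eq sum_distrib_left dchar_def mult_ac)
qed

lemma twisted_gauss_sum_noncoprime:
  assumes \<chi>: "primitive_dchar n \<chi>" and b: "\<not> coprime b n"
  shows "(\<Sum>a<n. \<chi> a * unit_root n ^ (a * b)) = 0"
proof -
  have ch: "dchar n \<chi>" using \<chi> by (rule primitive_dchar_imp_dchar)
  have n: "0 < n" using ch by (rule dchar_pos)
  define g where "g = gcd b n"
  define d where "d = n div g"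
  have "1 < g" using b n unfolding g_def by (metis coprime_iff_gcd_eq_1 gcd_pos_nat less_one nat_neq_iff)
  then have "d < n" using n by (simp add: d_def div_less_dividend)
  have "d * g = n" by (simp add: d_def g_def)
  then have "d dvd n" by (metis dvd_triv_left)
  with \<chi> \<open>d < n\<close> have "\<exists>c. coprime c n \<and> [c = 1] (mod d) \<and> \<chi> c \<noteq> 1"
    by (simp add: primitive_dchar_def)
  then obtain c where c: "coprime c n" "[c = 1] (mod d)" "\<chi> c \<noteq> 1" by blast
  have "[c * g = 1 * g] (mod n)"
    using cong_cmult_rightI[OF c(2), of g] \<open>d * g = n\<close> by simp
  moreover obtain b' where "b = g * b'" unfolding g_def by (meson gcd_dvd1 dvdE)
  ultimately have "[a * c * b = a * b] (mod n)" for a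
    using cong_scalar_right[of "c * g" "1 * g" n "a * b'"] by (simp add: ac_simps)
  then have root: "unit_root n ^ (a * c * b) = unit_root n ^ (a * b)" for a
    by (rule unit_root_power_cong[OF n])
  define h where "h y = \<chi> y * unit_root n ^ (y * b)" for y
  have "[(y + n) * b = y * b] (mod n)" for y by (simp add: cong_def add_mult_distrib)
  then have "h (y + n) = h y" for y
    using ch unit_root_power_cong[OF n] by (simp add: h_def dchar_def)
  then have "(\<Sum>a<n. h (a * c)) = (\<Sum>a<n. h a)" by (rule sum_mult_reindex_periodic[OF n c(1)])
  then have "\<chi> c * (\<Sum>a<n. h a) = (\<Sum>a<n. h a)"
    using ch root by (simp add: h_def sum_distrib_left dchar_def mult_ac)
  with c(3) show ?thesis by (simp add: h_def algebra_simps)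
qed

lemma gauss_sum_inverse_mult:
  assumes \<chi>: "primitive_dchar n \<chi>"
  shows "gauss_sum n (dchar_inv \<chi>) * gauss_sum n \<chi> = of_nat n * \<chi> (n - 1)"
proof -
  have ch: "dchar n \<chi>" using \<chi> by (rule primitive_dchar_imp_dchar)
  have n: "0 < n" using ch by (rule dchar_pos)
  have twist: "inverse (\<chi> b) * gauss_sum n \<chi> = (\<Sum>a<n. \<chi> a * unit_root n ^ (a * b))" for b
  proof (cases "coprime b n")
    case True
    then have "\<chi> b \<noteq> 0" using ch by (simp add: dchar_eq_0_iff)
    with twisted_gauss_sum_coprime[OF ch True] show ?thesis by (simp add: field_simps)
  qed (use ch \<chi> twisted_gauss_sum_noncoprime in \<open>simp add: dchar_eq_0_iff\<close>)
  have "gauss_sum n (dchar_inv \<chi>) * gauss_sum n \<chi>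
      = (\<Sum>b<n. unit_root n ^ b * (inverse (\<chi> b) * gauss_sum n \<chi>))"
    unfolding gauss_sum_eq[of n "dchar_inv \<chi>"] unfolding dchar_inv_def
    by (simp add: sum_distrib_left sum_distrib_right mult_ac)
  also have "\<dots> = (\<Sum>b<n. \<Sum>a<n. \<chi> a * unit_root n ^ (a * b) * unit_root n ^ b)"
    unfolding twist by (simp add: sum_distrib_left mult_ac)
  also have "\<dots> = (\<Sum>a<n. \<chi> a * (\<Sum>b<n. (unit_root n ^ (a + 1)) ^ b))"
  proof -
    have "(unit_root n ^ (a + 1)) ^ b = unit_root n ^ (a * b) * unit_root n ^ b" for a b
      unfolding power_mult[symmetric] by (simp add: add_mult_distrib power_add)
    then show ?thesis by (subst sum.swap) (simp add: sum_distrib_left mult.assoc)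
  qed
  also have "\<dots> = (\<Sum>a<n. if a = n - 1 then \<chi> a * of_nat n else 0)"
  proof (intro sum.cong refl)
    fix a assume "a \<in> {..<n}"
    then have "n dvd a + 1 \<longleftrightarrow> a = n - 1" using n by (auto dest: dvd_imp_le)
    then show "\<chi> a * (\<Sum>b<n. (unit_root n ^ (a + 1)) ^ b) = (if a = n - 1 then \<chi> a * of_nat n else 0)"
      using sum_unit_root_powers[OF n, of "a + 1"] by simp
  qed
  also have "\<dots> = of_nat n * \<chi> (n - 1)" using n by (simp add: mult.commute)
  finally show ?thesis .
qed

lemma sum_dchar_inverse_eq_0:
  assumes \<chi>: "dchar n \<chi>" and c: "coprime c n" "\<chi> c \<noteq> 1"
  shows "(\<Sum>a<n. inverse (\<chi> a)) = 0"
proof -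
  have n: "0 < n" using \<chi> by (rule dchar_pos)
  have "(\<Sum>a<n. inverse (\<chi> (a * c))) = (\<Sum>a<n. inverse (\<chi> a))"
    by (rule sum_mult_reindex_periodic[OF n c(1)]) (use \<chi> in \<open>simp add: dchar_def\<close>)
  moreover have "(\<Sum>a<n. inverse (\<chi> (a * c))) = inverse (\<chi> c) * (\<Sum>a<n. inverse (\<chi> a))"
    using \<chi> by (simp add: dchar_def sum_distrib_left mult.commute)
  ultimately have "(inverse (\<chi> c) - 1) * (\<Sum>a<n. inverse (\<chi> a)) = 0"
    by (simp add: left_diff_distrib)
  moreover have "inverse (\<chi> c) \<noteq> 1" using c(2) by (metis inverse_1 inverse_inverse_eq)
  ultimately show ?thesis by simp
qed

lemma chinese_remainder_gcd_nat:
  fixes a b m n :: nat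
  assumes "[a = b] (mod gcd m n)"
  obtains x where "[x = a] (mod m)" "[x = b] (mod n)"
proof (cases "n = 0")
  case True
  with assms show ?thesis by (intro that[of b]) (simp_all add: cong_sym)
next
  case False
  have "gcd (int m) (int n) dvd int b - int a"
    using assms by (simp flip: cong_int_iff add: cong_iff_dvd_diff gcd_int_int_eq dvd_diff_commute)
  then obtain t where t: "[int m * t = int b - int a] (mod int n)"
    using cong_solve_dvd_int by blast
  define x where "x = a + m * nat (t mod int n)"
  have x: "int x = int a + int m * (t mod int n)"
    using False by (simp add: x_def)
  have "[int x = int a] (mod int m)"
    unfolding x by (simp add: cong_iff_dvd_diff)
  moreover have "[int m * (t mod int n) = int m * t] (mod int n)"
    by (simp add: cong_def mod_mult_right_eq)
  with t have "[int x = int b] (mod int n)"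
    unfolding x by (metis add.commute cong_add_lcancel cong_trans diff_add_cancel)
  ultimately show ?thesis by (intro that[of x]) (simp_all add: cong_int_iff)
qed

lemma coprime_representative:
  fixes a n f :: nat
  assumes "n dvd f" "0 < f" "coprime a n"
  obtains x where "[x = a] (mod n)" "coprime x f"
proof -
  define S where "S = {q. prime q \<and> q dvd f \<and> \<not> q dvd n}"
  have "S \<subseteq> {d. d dvd f}" by (auto simp: S_def)
  then have "finite S" by (rule finite_subset) (use assms(2) in simp)
  have "coprime n (\<Prod>S)"
    by (intro prod_coprime_right) (simp add: S_def prime_imp_coprime ac_simps)
  then obtain x where x: "[x = a] (mod n)" "[x = 1] (mod \<Prod>S)"
    using chinese_remainder_gcd_nat[of a 1 n "\<Prod>S"] by auto
  have no_common_prime: "\<not> q dvd x" if "prime q" "q dvd f" for q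
  proof (cases "q dvd n")
    case True
    then have "[x = a] (mod q)" using x(1) cong_dvd_modulus_nat by blast
    then have "q dvd x \<longleftrightarrow> q dvd a" by (rule cong_dvd_iff)
    with True that(1) assms(3) show ?thesis using coprime_common_divisor not_prime_unit by blast
  next
    case False
    with that \<open>finite S\<close> have "q dvd \<Prod>S" by (intro dvd_prodI) (auto simp: S_def)
    then have "[x = 1] (mod q)" using x(2) cong_dvd_modulus_nat by blast
    then have "q dvd x \<longleftrightarrow> q dvd 1" by (rule cong_dvd_iff)
    with that(1) show ?thesis using not_prime_unit by blast
  qed
  have "coprime x f"
  proof (rule ccontr)
    assume "\<not> coprime x f"
    then have "gcd x f \<noteq> 1" using coprime_iff_gcd_eq_1 by blast
    then obtain q where "prime q" "q dvd gcd x f" using prime_factor_nat by blast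
    with no_common_prime show False by (meson dvd_trans gcd_dvd1 gcd_dvd2)
  qed
  with x(1) show ?thesis by (rule that)
qed

lemma primitive_dchar_conductor_dvd:
  assumes \<psi>: "dchar f \<psi>" and \<xi>: "primitive_dchar n \<xi>"
    and agree: "\<And>a. coprime a f \<Longrightarrow> \<xi> a = \<psi> a"
  shows "n dvd f"
proof (rule ccontr)
  assume "\<not> n dvd f"
  moreover have "gcd n f \<le> n"
    using dchar_pos[OF primitive_dchar_imp_dchar[OF \<xi>]] by (simp add: gcd_le1_nat)
  moreover have "gcd n f \<noteq> n" using \<open>\<not> n dvd f\<close> by (metis gcd_dvd2)
  ultimately have "gcd n f < n" "gcd n f dvd n" by simp_all
  with \<xi> have "\<exists>a. coprime a n \<and> [a = 1] (mod gcd n f) \<and> \<xi> a \<noteq> 1"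
    by (simp add: primitive_dchar_def)
  then obtain a where a: "coprime a n" "[a = 1] (mod gcd n f)" "\<xi> a \<noteq> 1" by blast
  obtain x where x: "[x = a] (mod n)" "[x = 1] (mod f)"
    using chinese_remainder_gcd_nat[OF a(2)] by blast
  then have "coprime x f" by (metis cong_imp_coprime cong_sym coprime_1_left)
  then have "\<xi> x = 1"
    using agree dchar_cong[OF \<psi> x(2)] dchar_1[OF \<psi>] by simp
  moreover have "\<xi> x = \<xi> a" using dchar_cong[OF primitive_dchar_imp_dchar[OF \<xi>] x(1)] .
  ultimately show False using a(3) by simp
qed

lemma dchar_square: "dchar f \<phi> \<Longrightarrow> dchar f (\<lambda>a. \<phi> a ^ 2)"
  by (simp add: dchar_def power_mult_distrib)

lemma Z_zeta_phi_induced_dchar: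
  assumes \<phi>: "dchar f \<phi>" and \<xi>: "dchar n \<xi>" and "n dvd f"
    and induced: "\<And>a. coprime a f \<Longrightarrow> \<xi> a = \<phi> a ^ 2"
  shows "\<xi> a \<in> Z_zeta_phi f \<phi>" "inverse (\<xi> a) \<in> Z_zeta_phi f \<phi>"
proof -
  have "\<xi> a \<in> Z_zeta_phi f \<phi> \<and> inverse (\<xi> a) \<in> Z_zeta_phi f \<phi>"
  proof (cases "coprime a n")
    case True
    then obtain x where "[x = a] (mod n)" "coprime x f"
      using coprime_representative[OF \<open>n dvd f\<close> dchar_pos[OF \<phi>]] by blast
    then have "\<xi> a = \<phi> x ^ 2" using dchar_cong[OF \<xi>] induced by metis
    then show ?thesis
      by (simp add: Z_zeta_phi_power Z_zeta_phi.val Z_zeta_phi_inverse_val[OF \<phi>] flip: power_inverse)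
  next
    case False
    with \<xi> have "\<xi> a = 0" by (simp add: dchar_eq_0_iff)
    then show ?thesis by (simp add: Z_zeta_phi_0)
  qed
  then show "\<xi> a \<in> Z_zeta_phi f \<phi>" "inverse (\<xi> a) \<in> Z_zeta_phi f \<phi>" by auto
qed

lemma Z_zeta_phi_unit_root: "unit_root f \<in> Z_zeta_phi f \<phi>"
  unfolding unit_root_def by (rule Z_zeta_phi.zeta)

lemma gauss_sum_mem_Z_zeta_phi:
  assumes "n dvd f" "0 < f" "\<And>a. \<chi> a \<in> Z_zeta_phi f \<phi>"
  shows "gauss_sum n \<chi> \<in> Z_zeta_phi f \<phi>"
  unfolding gauss_sum_eq unit_root_dvd[OF assms(1,2)]
  by (intro Z_zeta_phi_sum Z_zeta_phi.mult assms(3) Z_zeta_phi_power Z_zeta_phi_unit_root)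

lemma prod_primes_dvd:
  fixes P :: "nat set"
  assumes "finite P" "\<And>p. p \<in> P \<Longrightarrow> prime p" "\<And>p. p \<in> P \<Longrightarrow> p dvd x"
  shows "\<Prod>P dvd x"
  using assms
proof (induction P rule: finite_induct)
  case (insert p P)
  have "coprime p (\<Prod>P)"
    using insert.hyps(2) insert.prems(1) by (intro prod_coprime_right primes_coprime) auto
  with insert show ?case by (simp add: divides_mult)
qed simp

lemma euler_factor_prod_eq:
  assumes \<xi>: "dchar n \<xi>" and "finite P" and P: "\<And>p. p \<in> P \<Longrightarrow> prime p"
  shows "(\<Prod>p\<in>P. 1 - \<xi> p / of_nat p ^ 2)
       = (\<Prod>p\<in>{p\<in>P. \<not> p dvd n}. of_nat p ^ 2 - \<xi> p) / of_nat (\<Prod>{p\<in>P. \<not> p dvd n}) ^ 2"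
proof -
  have "\<xi> p = 0" if "p \<in> P" "p dvd n" for p
    using that P[OF that(1)] \<xi> by (auto simp: dchar_eq_0_iff coprime_absorb_left dest: not_prime_unit)
  then have "(\<Prod>p\<in>P. 1 - \<xi> p / of_nat p ^ 2) = (\<Prod>p\<in>{p\<in>P. \<not> p dvd n}. 1 - \<xi> p / of_nat p ^ 2)"
    using \<open>finite P\<close> by (intro prod.mono_neutral_right) auto
  also have "\<dots> = (\<Prod>p\<in>{p\<in>P. \<not> p dvd n}. (of_nat p ^ 2 - \<xi> p) / of_nat p ^ 2)"
  proof (intro prod.cong refl)
    fix p assume "p \<in> {p \<in> P. \<not> p dvd n}"
    then have "(of_nat p :: complex) \<noteq> 0" using P prime_gt_0_nat by fastforce
    then show "1 - \<xi> p / of_nat p ^ 2 = (of_nat p ^ 2 - \<xi> p) / of_nat p ^ 2"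
      by (simp add: field_simps)
  qed
  finally show ?thesis by (simp add: prod_dividef prod_power_distrib)
qed

lemma B2_eq_of_sum_eq_0:
  assumes "0 < n" "(\<Sum>a<n. \<chi> a) = 0"
  shows "B2 n \<chi> = (\<Sum>a<n. \<chi> a * (of_nat a ^ 2 - of_nat n * of_nat a)) / of_nat n"
proof -
  have "of_nat n * (\<chi> a * of_real ((real a / real n)^2 - real a / real n + 1/6))
        = \<chi> a * (of_nat a ^ 2 - of_nat n * of_nat a) / of_nat n + of_nat n / 6 * \<chi> a" for a
    using assms(1) by (simp add: field_simps power2_eq_square)
  then have "B2 n \<chi> = (\<Sum>a<n. \<chi> a * (of_nat a ^ 2 - of_nat n * of_nat a) / of_nat n)
      + of_nat n / 6 * (\<Sum>a<n. \<chi> a)"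
    unfolding B2_def sum_distrib_left by (simp add: sum.distrib)
  with assms(2) show ?thesis by (simp add: sum_divide_distrib)
qed

lemma B2_dchar_inv_primitive:
  assumes \<chi>: "primitive_dchar n \<chi>" and "1 < n"
  shows "B2 n (dchar_inv \<chi>) = (\<Sum>a<n. inverse (\<chi> a) * (of_nat a ^ 2 - of_nat n * of_nat a)) / of_nat n"
proof -
  have "\<exists>b. coprime b n \<and> [b = 1] (mod 1) \<and> \<chi> b \<noteq> 1"
    using \<chi>[unfolded primitive_dchar_def, THEN conjunct2, THEN spec[of _ 1]] \<open>1 < n\<close> by simp
  then have "(\<Sum>a<n. inverse (\<chi> a)) = 0"
    using sum_dchar_inverse_eq_0[OF primitive_dchar_imp_dchar[OF \<chi>]] by blast
  with B2_eq_of_sum_eq_0[of n "dchar_inv \<chi>"] \<open>1 < n\<close> show ?thesis by (simp add: dchar_inv_def)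
qed

lemma inverse_gauss_sum_dchar_inv:
  assumes \<chi>: "primitive_dchar n \<chi>"
  shows "1 / gauss_sum n (dchar_inv \<chi>) = gauss_sum n \<chi> * inverse (\<chi> (n - 1)) / of_nat n"
proof -
  have ch: "dchar n \<chi>" using \<chi> by (rule primitive_dchar_imp_dchar)
  then have "0 < n" by (rule dchar_pos)
  then have "\<chi> (n - 1) \<noteq> 0" using coprime_diff_one_left_nat[of n] by (simp add: dchar_eq_0_iff[OF ch])
  with gauss_sum_inverse_mult[OF \<chi>] \<open>0 < n\<close> have "gauss_sum n (dchar_inv \<chi>) \<noteq> 0" by auto
  with gauss_sum_inverse_mult[OF \<chi>] \<open>\<chi> (n - 1) \<noteq> 0\<close> \<open>0 < n\<close> show ?thesis
    by (simp add: field_simps)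
qed

lemma T1_pos: "0 < T1 f M"
  unfolding T1_def by (rule prod_pos) (auto dest: prime_gt_0_nat)

lemma euler_denominator_dvd:
  assumes "n dvd f" "0 < f"
  shows "\<Prod>{p. prime p \<and> p dvd f * T1 f M \<and> \<not> p dvd n} dvd f div n * T1 f M"
proof -
  obtain k where k: "f = n * k" using assms(1) by blast
  have "finite {p. prime p \<and> p dvd f * T1 f M \<and> \<not> p dvd n}"
    by (rule finite_subset[OF _ finite_prime_divisors[of "f * T1 f M"]]) (use assms(2) T1_pos in auto)
  then show ?thesis
    by (rule prod_primes_dvd) (use assms(2) in \<open>auto simp: k prime_dvd_mult_iff\<close>)
qed

lemma twelve_beta_tilde_eq:
  fixes \<phi> \<xi> :: "nat \<Rightarrow> complex" and f n N M L :: nat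
  assumes \<xi>: "dchar n \<xi>" and "0 < f"
  defines "P \<equiv> {p. prime p \<and> p dvd f * T1 f M \<and> \<not> p dvd n}"
  obtains c :: nat where "12 * beta_tilde f \<phi> n \<xi> N M L
      = of_nat (3 * f ^ 4 * T1 f M ^ 2) / (of_nat n * of_nat (\<Prod>P) ^ 2)
        * (of_nat c * (gauss_sum f (dchar_inv \<phi>) / gauss_sum n (dchar_inv \<xi>))
           * B2 n (dchar_inv \<xi>) * (\<Prod>p\<in>P. of_nat p ^ 2 - \<xi> p))"
proof -
  define P0 where "P0 = {p. prime p \<and> p dvd f * T1 f M}"
  define e where "e = (\<Prod>p\<in>{p. prime p \<and> p dvd f}. p ^ (multiplicity p M + delta f N M p))"
  have "finite P0" unfolding P0_def by (rule finite_prime_divisors) (use \<open>0 < f\<close> T1_pos in simp)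
  moreover have "\<And>p. p \<in> P0 \<Longrightarrow> prime p" by (simp add: P0_def)
  moreover have "{p \<in> P0. \<not> p dvd n} = P" by (auto simp: P0_def P_def)
  ultimately have euler: "(\<Prod>p\<in>P0. 1 - \<xi> p / of_nat p ^ 2)
      = (\<Prod>p\<in>P. of_nat p ^ 2 - \<xi> p) / of_nat (\<Prod>P) ^ 2"
    using euler_factor_prod_eq[OF \<xi>, of P0] by metis
  have "0 < \<Prod>P" by (rule prod_pos) (auto simp: P_def dest: prime_gt_0_nat)
  moreover have "0 < n" using \<xi> by (rule dchar_pos)
  ultimately have alg: "12 * of_nat (f * T) * (of_nat (f ^ 3 * T * I) / (4 * of_nat n) * of_nat c * x * y
        * (Q / of_nat (\<Prod>P) ^ 2))
      = of_nat (3 * f ^ 4 * T ^ 2) / (of_nat n * of_nat (\<Prod>P) ^ 2) * (of_nat (I * c) * x * y * Q)"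
    for T I c and x y Q :: complex
    by (simp add: field_simps power_numeral_reduce)
  have "12 * beta_tilde f \<phi> n \<xi> N M L = 12 * of_nat (f * T1 f M)
      * (of_nat (f ^ 3 * T1 f M * phi_T2 \<phi> L) / (4 * of_nat n) * of_nat e
         * (gauss_sum f (dchar_inv \<phi>) / gauss_sum n (dchar_inv \<xi>)) * B2 n (dchar_inv \<xi>)
         * ((\<Prod>p\<in>P. of_nat p ^ 2 - \<xi> p) / of_nat (\<Prod>P) ^ 2))"
    unfolding beta_tilde_def beta_def e_def[symmetric] P0_def[symmetric] euler by (simp only: mult.assoc)
  also have "\<dots> = of_nat (3 * f ^ 4 * T1 f M ^ 2) / (of_nat n * of_nat (\<Prod>P) ^ 2)
      * (of_nat (phi_T2 \<phi> L * e) * (gauss_sum f (dchar_inv \<phi>) / gauss_sum n (dchar_inv \<xi>))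
         * B2 n (dchar_inv \<xi>) * (\<Prod>p\<in>P. of_nat p ^ 2 - \<xi> p))"
    by (rule alg)
  finally show ?thesis by (rule that)
qed

lemma twelve_beta_tilde_mem_nontrivial:
  assumes \<phi>: "dchar f \<phi>" and \<xi>: "primitive_dchar n \<xi>" and "1 < n" "n dvd f"
    and induced: "\<And>a. coprime a f \<Longrightarrow> \<xi> a = \<phi> a ^ 2"
  shows "12 * beta_tilde f \<phi> n \<xi> N M L \<in> Z_zeta_phi f \<phi>"
proof -
  have \<xi>': "dchar n \<xi>" and "0 < f" using \<xi> \<phi> by (simp_all add: primitive_dchar_imp_dchar dchar_pos)
  have R\<xi>: "\<xi> a \<in> Z_zeta_phi f \<phi>" "inverse (\<xi> a) \<in> Z_zeta_phi f \<phi>" for a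
    using Z_zeta_phi_induced_dchar[OF \<phi> \<xi>' \<open>n dvd f\<close> induced] by blast+
  define P where "P = {p. prime p \<and> p dvd f * T1 f M \<and> \<not> p dvd n}"
  obtain c where eq: "12 * beta_tilde f \<phi> n \<xi> N M L
      = of_nat (3 * f ^ 4 * T1 f M ^ 2) / (of_nat n * of_nat (\<Prod>P) ^ 2)
        * (of_nat c * (gauss_sum f (dchar_inv \<phi>) / gauss_sum n (dchar_inv \<xi>))
           * B2 n (dchar_inv \<xi>) * (\<Prod>p\<in>P. of_nat p ^ 2 - \<xi> p))"
    using twelve_beta_tilde_eq[OF \<xi>' \<open>0 < f\<close>] unfolding P_def by blast
  obtain k where k: "f = n * k" using \<open>n dvd f\<close> by blast
  have "\<Prod>P dvd k * T1 f M"
    using euler_denominator_dvd[OF \<open>n dvd f\<close> \<open>0 < f\<close>] \<open>1 < n\<close> by (simp add: P_def k)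
  then have "n ^ 3 * (\<Prod>P) ^ 2 dvd n ^ 3 * (k * T1 f M) ^ 2"
    by (intro mult_dvd_mono dvd_refl dvd_power_same)
  moreover have "3 * f ^ 4 * T1 f M ^ 2 = n ^ 3 * (k * T1 f M) ^ 2 * (3 * n * k ^ 2)"
    unfolding k by (simp add: power_mult_distrib eval_nat_numeral algebra_simps)
  ultimately have dvd: "n ^ 3 * (\<Prod>P) ^ 2 dvd 3 * f ^ 4 * T1 f M ^ 2"
    by (metis dvd_mult2)
  have "12 * beta_tilde f \<phi> n \<xi> N M L = of_nat (3 * f ^ 4 * T1 f M ^ 2) / of_nat (n ^ 3 * (\<Prod>P) ^ 2)
      * (of_nat c * gauss_sum f (dchar_inv \<phi>) * gauss_sum n \<xi> * inverse (\<xi> (n - 1))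
         * (\<Sum>a<n. inverse (\<xi> a) * (of_nat a ^ 2 - of_nat n * of_nat a)) * (\<Prod>p\<in>P. of_nat p ^ 2 - \<xi> p))"
    unfolding eq B2_dchar_inv_primitive[OF \<xi> \<open>1 < n\<close>] divide_inverse[of "gauss_sum f _"]
      inverse_gauss_sum_dchar_inv[OF \<xi>, unfolded divide_inverse mult_1_left]
    using \<open>1 < n\<close> by (simp add: field_simps power_numeral_reduce)
  also have "\<dots> \<in> Z_zeta_phi f \<phi>"
    using \<open>0 < f\<close> \<open>n dvd f\<close> R\<xi> unfolding dchar_inv_def
    by (intro Z_zeta_phi_of_nat_div_mult[OF dvd] Z_zeta_phi.mult Z_zeta_phi_of_nat Z_zeta_phi_prod
        Z_zeta_phi_sum Z_zeta_phi_diff Z_zeta_phi_power gauss_sum_mem_Z_zeta_phi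
        Z_zeta_phi_inverse_val[OF \<phi>]) auto
  finally show ?thesis .
qed

lemma even_power2_mult_prod_square_minus_1:
  fixes f :: nat
  assumes "1 < f" "finite P" "\<And>q. prime q \<Longrightarrow> q dvd f \<Longrightarrow> q \<in> P"
  shows "even (f ^ 2 * (\<Prod>p\<in>P. p ^ 2 - 1))"
proof (cases "even f")
  case False
  obtain q where q: "prime q" "q dvd f" using prime_factor_nat \<open>1 < f\<close> by (metis less_irrefl)
  with False have "odd q" by (metis dvd_trans)
  with q(1) have "even (q ^ 2 - 1)" by (simp add: prime_gt_0_nat)
  moreover have "q ^ 2 - 1 dvd (\<Prod>p\<in>P. p ^ 2 - 1)" using q assms by (intro dvd_prodI) auto
  ultimately show ?thesis by (metis dvd_trans dvd_mult)
qed simp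

lemma twelve_beta_tilde_mem_trivial:
  assumes \<phi>: "dchar f \<phi>" and "1 < f" and \<xi>: "dchar 1 \<xi>"
  shows "12 * beta_tilde f \<phi> 1 \<xi> N M L \<in> Z_zeta_phi f \<phi>"
proof -
  have \<xi>1: "\<xi> a = 1" for a using dchar_modulus_1[OF \<xi>] .
  define P where "P = {p. prime p \<and> p dvd f * T1 f M \<and> \<not> p dvd 1}"
  define W where "W = (\<Prod>p\<in>P. p ^ 2 - 1)"
  obtain c where eq: "12 * beta_tilde f \<phi> 1 \<xi> N M L
      = of_nat (3 * f ^ 4 * T1 f M ^ 2) / (of_nat 1 * of_nat (\<Prod>P) ^ 2)
        * (of_nat c * (gauss_sum f (dchar_inv \<phi>) / gauss_sum 1 (dchar_inv \<xi>))
           * B2 1 (dchar_inv \<xi>) * (\<Prod>p\<in>P. of_nat p ^ 2 - \<xi> p))"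
    using twelve_beta_tilde_eq[OF \<xi>] \<open>1 < f\<close> unfolding P_def by (meson less_trans zero_less_one)
  have "(\<Prod>p\<in>P. of_nat p ^ 2 - \<xi> p) = (of_nat W :: complex)"
    unfolding W_def of_nat_prod
  proof (intro prod.cong refl)
    fix p assume "p \<in> P"
    then have "0 < p" by (simp add: P_def prime_gt_0_nat)
    then have "1 \<le> p ^ 2" by simp
    then show "of_nat p ^ 2 - \<xi> p = of_nat (p ^ 2 - 1)" by (simp add: \<xi>1 of_nat_diff)
  qed
  then have "12 * beta_tilde f \<phi> 1 \<xi> N M L
      = of_nat (f ^ 4 * T1 f M ^ 2 * W) / of_nat (2 * (\<Prod>P) ^ 2) * (of_nat c * gauss_sum f (dchar_inv \<phi>))"
    unfolding eq by (simp add: gauss_sum_def B2_def dchar_inv_def \<xi>1 field_simps)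
  also have "\<dots> \<in> Z_zeta_phi f \<phi>"
  proof (rule Z_zeta_phi_of_nat_div_mult)
    have "finite P" unfolding P_def
      by (rule finite_subset[OF _ finite_prime_divisors[of "f * T1 f M"]]) (use \<open>1 < f\<close> T1_pos in auto)
    have "(\<Prod>P) ^ 2 dvd (f * T1 f M) ^ 2"
      using euler_denominator_dvd[of 1 f M] \<open>1 < f\<close> by (intro dvd_power_same) (simp add: P_def)
    moreover have "2 dvd f ^ 2 * W"
      unfolding W_def using \<open>1 < f\<close> \<open>finite P\<close>
      by (rule even_power2_mult_prod_square_minus_1) (auto simp: P_def)
    ultimately have "(\<Prod>P) ^ 2 * 2 dvd (f * T1 f M) ^ 2 * (f ^ 2 * W)" by (rule mult_dvd_mono)
    then show "2 * (\<Prod>P) ^ 2 dvd f ^ 4 * T1 f M ^ 2 * W"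
      by (simp add: power_mult_distrib eval_nat_numeral mult_ac)
    show "of_nat c * gauss_sum f (dchar_inv \<phi>) \<in> Z_zeta_phi f \<phi>"
      using \<open>1 < f\<close> unfolding dchar_inv_def
      by (intro Z_zeta_phi.mult Z_zeta_phi_of_nat gauss_sum_mem_Z_zeta_phi Z_zeta_phi_inverse_val[OF \<phi>]) auto
  qed
  finally show ?thesis .
qed

theorem mainTheorem7:
  fixes \<phi> \<xi> :: "nat \<Rightarrow> complex" and f n N M L :: nat
  assumes prim: "primitive_dchar f \<phi>"
    and nontriv: "\<exists>a. coprime a f \<and> \<phi> a \<noteq> 1"
    and pos: "0 < N" "0 < M" "0 < L"
    and div: "f^2 * M * L dvd N"
    and cop: "coprime (f * M) L"
    and xi_prim: "primitive_dchar n \<xi>"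
    and xi_ind: "\<forall>a. coprime a f \<longrightarrow> \<xi> a = (\<phi> a)^2"
  shows "12 * beta_tilde f \<phi> n \<xi> N M L \<in> Z_zeta_phi f \<phi>"
proof -
  have \<phi>: "dchar f \<phi>" and \<xi>: "dchar n \<xi>"
    using prim xi_prim by (simp_all add: primitive_dchar_imp_dchar)
  have "n dvd f"
    using primitive_dchar_conductor_dvd[OF dchar_square[OF \<phi>] xi_prim] xi_ind by blast
  show ?thesis
  proof (cases "n = 1")
    case True
    have "f \<noteq> 1" using nontriv dchar_modulus_1[of \<phi>] \<phi> by auto
    then have "1 < f" using dchar_pos[OF \<phi>] by simp
    with \<phi> \<xi> True show ?thesis using twelve_beta_tilde_mem_trivial by blast
  next
    case False
    then have "1 < n" using dchar_pos[OF \<xi>] by simp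
    with \<phi> xi_prim \<open>n dvd f\<close> xi_ind show ?thesis
      using twelve_beta_tilde_mem_nontrivial by blast
  qed
qed

end
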